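(* Let $q$ be even and $u\in\mathbf{SL}_n(q)$ unipotent of type $\lambda=(\lambda_1,\dots,\lambda_k)$, and assume $\lambda_i\ge\lambda_{i+1}\ge3$ for some $1\le i\le k-1$. Then the conjugacy class $\mathcal{O}_u$ in $\mathbf{SL}_n(q)$ is of type D.
   Context: Unipotent type $(\lambda_1\ge\dots\ge\lambda_k)$ = sizes of Jordan blocks. Conjugacy classes are racks with $x\triangleright y=xyx^{-1}$. A subrack $Y$ is decomposable if $Y=R\sqcup S$ with nonempty subracks $R,S$, $Y\triangleright R=R$, $Y\triangleright S=S$. Type D: a decomposable subrack $R\sqcup S$ with $r\in R,s\in S$ and $r\triangleright(s\triangleright(r\triangleright s))\neq s$. *)

theory Defs
  imports "Jordan_Normal_Form.Jordan_Normal_Form"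
begin

definition SL_mat :: "nat \<Rightarrow> 'a :: field mat set" where
  "SL_mat n = {A. A \<in> carrier_mat n n \<and> det A = 1}"

definition inv_mat :: "nat \<Rightarrow> 'a :: field mat \<Rightarrow> 'a mat" where
  "inv_mat n A = (SOME B. B \<in> carrier_mat n n \<and> A * B = 1\<^sub>m n \<and> B * A = 1\<^sub>m n)"

definition conj_op :: "nat \<Rightarrow> 'a :: field mat \<Rightarrow> 'a mat \<Rightarrow> 'a mat" where
  "conj_op n x y = x * y * inv_mat n x"

definition conj_class_SL :: "nat \<Rightarrow> 'a :: field mat \<Rightarrow> 'a mat set" where
  "conj_class_SL n u = {conj_op n g u | g. g \<in> SL_mat n}"

(* u is unipotent of type lam = (lam_1 >= ... >= lam_k): its Jordan blocks all have
   eigenvalue 1 and their sizes are, as a multiset, lam *)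
definition unipotent_of_type :: "'a :: field mat \<Rightarrow> nat list \<Rightarrow> bool" where
  "unipotent_of_type u lam \<longleftrightarrow> sorted_wrt (\<ge>) lam \<and>
     (\<exists>n_as. jordan_nf u n_as \<and> (\<forall>p \<in> set n_as. snd p = 1) \<and> mset (map fst n_as) = mset lam)"

definition subrack :: "('r \<Rightarrow> 'r \<Rightarrow> 'r) \<Rightarrow> 'r set \<Rightarrow> 'r set \<Rightarrow> bool" where
  "subrack op X Y \<longleftrightarrow> Y \<subseteq> X \<and> (\<forall>a\<in>Y. \<forall>b\<in>Y. op a b \<in> Y)"

definition rack_act_set :: "('r \<Rightarrow> 'r \<Rightarrow> 'r) \<Rightarrow> 'r set \<Rightarrow> 'r set \<Rightarrow> 'r set" where
  "rack_act_set op Y R = {op y r | y r. y \<in> Y \<and> r \<in> R}"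

definition rack_type_D :: "('r \<Rightarrow> 'r \<Rightarrow> 'r) \<Rightarrow> 'r set \<Rightarrow> bool" where
  "rack_type_D op X \<longleftrightarrow> (\<exists>R S.
     subrack op X (R \<union> S) \<and> R \<inter> S = {} \<and> R \<noteq> {} \<and> S \<noteq> {} \<and>
     subrack op X R \<and> subrack op X S \<and>
     rack_act_set op (R \<union> S) R = R \<and> rack_act_set op (R \<union> S) S = S \<and>
     (\<exists>r\<in>R. \<exists>s\<in>S. op r (op s (op r s)) \<noteq> s))"

end

theory Submission
  imports Defs
begin

text \<open>
  Write \<open>u = P J Q\<close> with \<open>J\<close> the Jordan form and \<open>Q = P\<^sup>-\<^sup>1\<close>. Pick two Jordan blocks of
  size at least 3; let \<open>p, p+1, p+2\<close> be the last three positions of the first and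
  \<open>t, t+1\<close> the first two positions of the second. Conjugating \<open>J\<close> by the permutation
  matrix of the 3-cycle \<open>(p+2 \<mapsto> t \<mapsto> t+1 \<mapsto> p+2)\<close>, an even permutation, gives a matrix
  \<open>S\<close> which is again upper unitriangular, and \<open>s = P S Q\<close> lies in the class of \<open>u\<close>.
  The superdiagonal entry at \<open>(p+1, p+2)\<close> is a homomorphism from the unitriangular
  group to the additive group; it is \<open>1\<close> on \<open>J\<close> and \<open>0\<close> on \<open>S\<close>, so its fibres on the part
  of the class lying in \<open>P U Q\<close> give a decomposable subrack containing \<open>u\<close> and \<open>s\<close>.
\<close>

lemma inv_mat_eqI:
  fixes A B :: "'a :: field mat"
  assumes A: "A \<in> carrier_mat n n" and B: "B \<in> carrier_mat n n" and AB: "A * B = 1\<^sub>m n"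
  shows "inv_mat n A = B"
proof -
  have BA: "B * A = 1\<^sub>m n" by (rule mat_mult_left_right_inverse[OF A B AB])
  let ?C = "inv_mat n A"
  have "?C \<in> carrier_mat n n \<and> A * ?C = 1\<^sub>m n \<and> ?C * A = 1\<^sub>m n"
    unfolding inv_mat_def by (rule someI[of _ B]) (use B AB BA in auto)
  hence C: "?C \<in> carrier_mat n n" "?C * A = 1\<^sub>m n" by auto
  have "?C = ?C * (A * B)" using C AB by simp
  also have "\<dots> = (?C * A) * B" by (rule assoc_mult_mat[symmetric, OF C(1) A B])
  also have "\<dots> = B" using C B by simp
  finally show ?thesis .
qed

lemma SL_mat_carrier: "A \<in> SL_mat n \<Longrightarrow> A \<in> carrier_mat n n"
  unfolding SL_mat_def by auto

lemma SL_mat_mult: "A \<in> SL_mat n \<Longrightarrow> B \<in> SL_mat n \<Longrightarrow> A * B \<in> SL_mat n"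
  unfolding SL_mat_def by (auto simp: det_mult)

lemma SL_mat_inv:
  fixes A :: "'a :: field mat"
  assumes "A \<in> SL_mat n"
  shows "inv_mat n A \<in> carrier_mat n n" "A * inv_mat n A = 1\<^sub>m n" "inv_mat n A * A = 1\<^sub>m n"
    "inv_mat n A \<in> SL_mat n"
proof -
  have A: "A \<in> carrier_mat n n" "det A = 1" using assms unfolding SL_mat_def by auto
  have "A \<in> Units (ring_mat TYPE('a) n undefined)"
    by (rule det_non_zero_imp_unit[OF A(1)]) (use A in auto)
  then obtain B where B: "B \<in> carrier_mat n n" "A * B = 1\<^sub>m n"
    unfolding Units_def ring_mat_simps by auto
  have BA: "B * A = 1\<^sub>m n" by (rule mat_mult_left_right_inverse[OF A(1) B])
  have eq: "inv_mat n A = B" by (rule inv_mat_eqI[OF A(1) B])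
  show "inv_mat n A \<in> carrier_mat n n" "A * inv_mat n A = 1\<^sub>m n" "inv_mat n A * A = 1\<^sub>m n"
    using eq B BA by auto
  have "det A * det B = 1" using det_mult[OF A(1) B(1)] B(2) by simp
  hence "det B = 1" using A by simp
  thus "inv_mat n A \<in> SL_mat n" using eq B unfolding SL_mat_def by auto
qed

lemma SL_mat_inv_cancel:
  fixes A X :: "'a :: field mat"
  assumes A: "A \<in> SL_mat n" and X: "X \<in> carrier_mat n nc"
  shows "inv_mat n A * (A * X) = X" "A * (inv_mat n A * X) = X"
proof -
  note I = SL_mat_inv[OF A] and Ac = SL_mat_carrier[OF A]
  have "inv_mat n A * (A * X) = (inv_mat n A * A) * X"
    by (rule assoc_mult_mat[symmetric, OF I(1) Ac X])
  thus "inv_mat n A * (A * X) = X" using I X by simp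
  have "A * (inv_mat n A * X) = (A * inv_mat n A) * X"
    by (rule assoc_mult_mat[symmetric, OF Ac I(1) X])
  thus "A * (inv_mat n A * X) = X" using I X by simp
qed

lemma inv_mat_mult:
  fixes A B :: "'a :: field mat"
  assumes A: "A \<in> SL_mat n" and B: "B \<in> SL_mat n"
  shows "inv_mat n (A * B) = inv_mat n B * inv_mat n A"
proof (rule inv_mat_eqI)
  note IA = SL_mat_inv[OF A] and IB = SL_mat_inv[OF B]
    and Ac = SL_mat_carrier[OF A] and Bc = SL_mat_carrier[OF B]
  show "A * B \<in> carrier_mat n n" "inv_mat n B * inv_mat n A \<in> carrier_mat n n"
    using Ac Bc IA IB by auto
  have "A * B * (inv_mat n B * inv_mat n A) = A * (B * (inv_mat n B * inv_mat n A))"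
    using Ac Bc IA IB by (simp add: assoc_mult_mat[of _ n n _ n _ n])
  also have "\<dots> = 1\<^sub>m n" using SL_mat_inv_cancel(2)[OF B IA(1)] IA Ac by simp
  finally show "A * B * (inv_mat n B * inv_mat n A) = 1\<^sub>m n" .
qed

lemma inv_mat_inv:
  fixes A :: "'a :: field mat"
  assumes "A \<in> SL_mat n"
  shows "inv_mat n (inv_mat n A) = A"
  by (rule inv_mat_eqI) (use SL_mat_inv[OF assms] SL_mat_carrier[OF assms] in auto)

lemma conj_class_SL_subset:
  fixes u :: "'a :: field mat"
  assumes "u \<in> SL_mat n"
  shows "conj_class_SL n u \<subseteq> SL_mat n"
  using assms unfolding conj_class_SL_def conj_op_def by (auto intro!: SL_mat_mult SL_mat_inv(4))

lemma self_in_conj_class_SL: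
  fixes u :: "'a :: field mat"
  assumes "u \<in> SL_mat n"
  shows "u \<in> conj_class_SL n u"
proof -
  have one: "1\<^sub>m n \<in> SL_mat n" unfolding SL_mat_def by auto
  have "inv_mat n (1\<^sub>m n) = (1\<^sub>m n :: 'a mat)" by (rule inv_mat_eqI) auto
  hence "conj_op n (1\<^sub>m n) u = u"
    using SL_mat_carrier[OF assms] unfolding conj_op_def by simp
  thus ?thesis using one unfolding conj_class_SL_def by force
qed

lemma conj_op_in_conj_class_SL:
  fixes u :: "'a :: field mat"
  assumes u: "u \<in> SL_mat n" and x: "x \<in> conj_class_SL n u" and y: "y \<in> SL_mat n"
  shows "conj_op n y x \<in> conj_class_SL n u"
proof -
  from x obtain g where g: "g \<in> SL_mat n" and xg: "x = g * u * inv_mat n g"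
    unfolding conj_class_SL_def conj_op_def by auto
  have "conj_op n y x = conj_op n (y * g) u"
    unfolding conj_op_def xg inv_mat_mult[OF y g]
    using SL_mat_carrier[OF g] SL_mat_carrier[OF y] SL_mat_carrier[OF u]
      SL_mat_inv(1)[OF g] SL_mat_inv(1)[OF y]
    by (simp add: assoc_mult_mat[of _ n n _ n _ n])
  thus ?thesis using SL_mat_mult[OF y g] unfolding conj_class_SL_def by blast
qed

lemma conj_op_inv_conj_op:
  fixes y x :: "'a :: field mat"
  assumes y: "y \<in> SL_mat n" and x: "x \<in> carrier_mat n n"
  shows "conj_op n y (conj_op n (inv_mat n y) x) = x"
  unfolding conj_op_def inv_mat_inv[OF y]
  using SL_mat_carrier[OF y] SL_mat_inv[OF y] x
  by (simp add: assoc_mult_mat[of _ n n _ n _ n] SL_mat_inv_cancel[OF y, where nc = n])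

lemma conj_op_triple_neq:
  fixes r s :: "'a :: field mat"
  assumes r: "r \<in> SL_mat n" and s: "s \<in> SL_mat n"
    and ne: "r * s * (r * s) \<noteq> s * r * (s * r)"
  shows "conj_op n r (conj_op n s (conj_op n r s)) \<noteq> s"
proof
  note rc = SL_mat_carrier[OF r] and sc = SL_mat_carrier[OF s]
  assume eq: "conj_op n r (conj_op n s (conj_op n r s)) = s"
  have "conj_op n r (conj_op n s (conj_op n r s)) * (r * (s * r)) = r * (s * (r * s))"
    unfolding conj_op_def using rc sc SL_mat_inv[OF r] SL_mat_inv[OF s]
    by (simp add: assoc_mult_mat[of _ n n _ n _ n]
        SL_mat_inv_cancel[OF r, where nc = n] SL_mat_inv_cancel[OF s, where nc = n])
  hence "r * (s * (r * s)) = s * (r * (s * r))" using eq by simp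
  thus False using ne rc sc by (simp add: assoc_mult_mat[of _ n n _ n _ n])
qed

section \<open>A criterion for type D\<close>

lemma rack_act_set_eqI:
  assumes closed: "\<And>y x. y \<in> Y \<Longrightarrow> x \<in> T \<Longrightarrow> op y x \<in> T"
    and r: "r \<in> Y" and onto: "\<And>x. x \<in> T \<Longrightarrow> \<exists>x'\<in>T. op r x' = x"
  shows "rack_act_set op Y T = T"
  unfolding rack_act_set_def using closed r onto by fastforce

lemma homomorphism_conj_op:
  fixes \<pi> :: "'a :: field mat \<Rightarrow> 'b :: ab_group_add"
  assumes K_mult: "\<And>x y. x \<in> K \<Longrightarrow> y \<in> K \<Longrightarrow> x * y \<in> K"
    and K_inv: "\<And>x. x \<in> K \<Longrightarrow> x \<in> SL_mat n \<Longrightarrow> inv_mat n x \<in> K"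
    and \<pi>_mult: "\<And>x y. x \<in> K \<Longrightarrow> y \<in> K \<Longrightarrow> \<pi> (x * y) = \<pi> x + \<pi> y"
    and y: "y \<in> K" "y \<in> SL_mat n" and x: "x \<in> K"
  shows "\<pi> (conj_op n y x) = \<pi> x" "conj_op n y x \<in> K"
proof -
  have iy: "inv_mat n y \<in> K" using K_inv y by auto
  have one: "1\<^sub>m n \<in> K" using K_mult[OF y(1) iy] SL_mat_inv(2)[OF y(2)] by simp
  have "\<pi> (1\<^sub>m n) = \<pi> (1\<^sub>m n * 1\<^sub>m n)" by simp
  hence \<pi>_one: "\<pi> (1\<^sub>m n) = 0" unfolding \<pi>_mult[OF one one] by simp
  have \<pi>_inv: "\<pi> y + \<pi> (inv_mat n y) = 0"
    using \<pi>_mult[OF y(1) iy] SL_mat_inv(2)[OF y(2)] \<pi>_one by simp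
  have "\<pi> (conj_op n y x) = \<pi> x + (\<pi> y + \<pi> (inv_mat n y))"
    unfolding conj_op_def \<pi>_mult[OF K_mult[OF y(1) x] iy] \<pi>_mult[OF y(1) x] by (simp add: ac_simps)
  thus "\<pi> (conj_op n y x) = \<pi> x" using \<pi>_inv by simp
  show "conj_op n y x \<in> K" unfolding conj_op_def by (rule K_mult[OF K_mult[OF y(1) x] iy])
qed

lemma rack_type_D_by_homomorphism:
  fixes u :: "'a :: field mat" and \<pi> :: "'a mat \<Rightarrow> 'b :: ab_group_add"
  assumes u: "u \<in> SL_mat n"
    and K_mult: "\<And>x y. x \<in> K \<Longrightarrow> y \<in> K \<Longrightarrow> x * y \<in> K"
    and K_inv: "\<And>x. x \<in> K \<Longrightarrow> x \<in> SL_mat n \<Longrightarrow> inv_mat n x \<in> K"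
    and \<pi>_mult: "\<And>x y. x \<in> K \<Longrightarrow> y \<in> K \<Longrightarrow> \<pi> (x * y) = \<pi> x + \<pi> y"
    and r: "r \<in> conj_class_SL n u" "r \<in> K" and s: "s \<in> conj_class_SL n u" "s \<in> K"
    and \<pi>_neq: "\<pi> r \<noteq> \<pi> s"
    and ne: "r * s * (r * s) \<noteq> s * r * (s * r)"
  shows "rack_type_D (conj_op n) (conj_class_SL n u)"
proof -
  let ?O = "conj_class_SL n u"
  note conj_\<pi> = homomorphism_conj_op[OF K_mult K_inv \<pi>_mult]
  have O_SL: "x \<in> SL_mat n" if "x \<in> ?O" for x using conj_class_SL_subset[OF u] that by blast
  define fibre where "fibre v = {x \<in> ?O. x \<in> K \<and> \<pi> x = v}" for v
  define R where "R = fibre (\<pi> r)"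
  define S where "S = fibre (\<pi> s)"
  have rR: "r \<in> R" and sS: "s \<in> S" unfolding R_def S_def fibre_def using r s by auto
  have RS: "R \<union> S \<subseteq> ?O \<inter> K" unfolding R_def S_def fibre_def by auto
  have closed: "conj_op n y x \<in> fibre v" if "y \<in> K" "y \<in> SL_mat n" "x \<in> fibre v" for y x v
    using conj_\<pi>[of y x] conj_op_in_conj_class_SL[OF u, of x y] that unfolding fibre_def by auto
  have act: "rack_act_set (conj_op n) (R \<union> S) (fibre v) = fibre v" for v
  proof (rule rack_act_set_eqI[OF _ UnI1[OF rR]])
    show "conj_op n y x \<in> fibre v" if "y \<in> R \<union> S" "x \<in> fibre v" for y x
      using closed[of y x] that RS O_SL by blast
    have r': "r \<in> SL_mat n" "inv_mat n r \<in> K" "inv_mat n r \<in> SL_mat n"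
      using O_SL[OF r(1)] K_inv[OF r(2)] SL_mat_inv(4) by auto
    show "\<exists>x'\<in>fibre v. conj_op n r x' = x" if "x \<in> fibre v" for x
      using closed[OF r'(2,3) that] conj_op_inv_conj_op[OF r'(1) SL_mat_carrier[OF O_SL], of x] that
      unfolding fibre_def by auto
  qed
  have act_R: "rack_act_set (conj_op n) (R \<union> S) R = R"
    and act_S: "rack_act_set (conj_op n) (R \<union> S) S = S"
    using act[of "\<pi> r"] act[of "\<pi> s"] by (simp_all only: R_def[symmetric] S_def[symmetric])
  have "rack_act_set (conj_op n) (R \<union> S) (R \<union> S) \<subseteq> R \<union> S"
    using act_R act_S unfolding rack_act_set_def by blast
  hence sub: "subrack (conj_op n) ?O (R \<union> S)" "subrack (conj_op n) ?O R" "subrack (conj_op n) ?O S"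
    using RS act_R act_S unfolding subrack_def rack_act_set_def by blast+
  have disj: "R \<inter> S = {}" unfolding R_def S_def fibre_def using \<pi>_neq by auto
  have "conj_op n r (conj_op n s (conj_op n r s)) \<noteq> s"
    using conj_op_triple_neq[OF O_SL O_SL ne] r s by blast
  thus ?thesis unfolding rack_type_D_def using sub disj rR sS act_R act_S by blast
qed

section \<open>Upper unitriangular matrices\<close>

definition unitriangular :: "nat \<Rightarrow> 'a :: comm_ring_1 mat \<Rightarrow> bool" where
  "unitriangular n A \<longleftrightarrow> A \<in> carrier_mat n n \<and> (\<forall>i<n. A $$ (i,i) = 1) \<and> (\<forall>i<n. \<forall>j<i. A $$ (i,j) = 0)"

lemma index_mult_mat_support:
  fixes A B :: "'a :: comm_ring_1 mat"
  assumes A: "A \<in> carrier_mat n n" and B: "B \<in> carrier_mat n n" and i: "i < n" and j: "j < n"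
    and S: "S \<subseteq> {..<n}" and zero: "\<And>l. l < n \<Longrightarrow> l \<notin> S \<Longrightarrow> A $$ (i,l) * B $$ (l,j) = 0"
  shows "(A * B) $$ (i,j) = (\<Sum>l\<in>S. A $$ (i,l) * B $$ (l,j))"
proof -
  have "(A * B) $$ (i,j) = (\<Sum>l\<in>{0..<n}. A $$ (i,l) * B $$ (l,j))"
    using A B i j by (simp add: scalar_prod_def)
  also have "\<dots> = (\<Sum>l\<in>S. A $$ (i,l) * B $$ (l,j))"
    by (rule sum.mono_neutral_right) (use S zero in auto)
  finally show ?thesis .
qed

lemma unitriangular_mult:
  assumes A: "unitriangular n A" and B: "unitriangular n B"
  shows "unitriangular n (A * B)"
proof -
  have Ac: "A \<in> carrier_mat n n" and Bc: "B \<in> carrier_mat n n"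
    using A B unfolding unitriangular_def by auto
  have diag: "(A * B) $$ (i,i) = 1" if i: "i < n" for i
  proof -
    have "(A * B) $$ (i,i) = (\<Sum>l\<in>{i}. A $$ (i,l) * B $$ (l,i))"
    proof (rule index_mult_mat_support[OF Ac Bc i i])
      fix l assume "l < n" "l \<notin> {i}"
      thus "A $$ (i,l) * B $$ (l,i) = 0" using A B i unfolding unitriangular_def
        by (cases "l < i") auto
    qed (use i in auto)
    thus ?thesis using A B i unfolding unitriangular_def by auto
  qed
  have lower: "(A * B) $$ (i,j) = 0" if i: "i < n" and j: "j < i" for i j
  proof -
    have "(A * B) $$ (i,j) = (\<Sum>l\<in>{}. A $$ (i,l) * B $$ (l,j))"
    proof (rule index_mult_mat_support[OF Ac Bc i])
      fix l assume "l < n" "l \<notin> {}"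
      thus "A $$ (i,l) * B $$ (l,j) = 0" using A B i j unfolding unitriangular_def
        by (cases "l < i") auto
    qed (use i j in auto)
    thus ?thesis by simp
  qed
  show ?thesis unfolding unitriangular_def using Ac Bc diag lower by auto
qed

lemma unitriangular_mult_superdiag:
  assumes A: "unitriangular n A" and B: "unitriangular n B" and c: "Suc c < n"
  shows "(A * B) $$ (c, Suc c) = A $$ (c, Suc c) + B $$ (c, Suc c)"
proof -
  have Ac: "A \<in> carrier_mat n n" and Bc: "B \<in> carrier_mat n n"
    using A B unfolding unitriangular_def by auto
  have "(A * B) $$ (c, Suc c) = (\<Sum>l\<in>{c, Suc c}. A $$ (c,l) * B $$ (l,Suc c))"
  proof (rule index_mult_mat_support[OF Ac Bc])
    fix l assume "l < n" "l \<notin> {c, Suc c}"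
    thus "A $$ (c,l) * B $$ (l,Suc c) = 0" using A B c unfolding unitriangular_def
      by (cases "l < c") auto
  qed (use c in auto)
  thus ?thesis using A B c unfolding unitriangular_def by (simp add: add.commute)
qed

lemma unitriangular_right_inverse:
  fixes A B :: "'a :: comm_ring_1 mat"
  assumes A: "unitriangular n A" and Bc: "B \<in> carrier_mat n n" and AB: "A * B = 1\<^sub>m n"
  shows "unitriangular n B"
proof -
  have Ac: "A \<in> carrier_mat n n" using A unfolding unitriangular_def by auto
  have rows: "\<forall>j\<le>i. B $$ (i,j) = (if i = j then 1 else 0)" if "i < n" for i
    using that
  proof (induction "n - i" arbitrary: i rule: less_induct)
    case (less i)
    show ?case
    proof (intro allI impI)
      fix j assume j: "j \<le> i"
      have "(A * B) $$ (i,j) = (\<Sum>l\<in>{i}. A $$ (i,l) * B $$ (l,j))"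
      proof (rule index_mult_mat_support[OF Ac Bc less.prems])
        fix l assume l: "l < n" "l \<notin> {i}"
        show "A $$ (i,l) * B $$ (l,j) = 0"
        proof (cases "l < i")
          case True thus ?thesis using A less.prems unfolding unitriangular_def by auto
        next
          case False
          hence "B $$ (l,j) = 0" using less.hyps[of l] l j by auto
          thus ?thesis by simp
        qed
      qed (use less.prems j in auto)
      also have "\<dots> = B $$ (i,j)" using A less.prems unfolding unitriangular_def by auto
      finally show "B $$ (i,j) = (if i = j then 1 else 0)"
        using AB less.prems j by auto
    qed
  qed
  show ?thesis unfolding unitriangular_def using Bc rows by auto
qed

lemma conj_mult_distrib:
  fixes P Q X Y :: "'a :: comm_ring_1 mat"
  assumes P: "P \<in> carrier_mat n n" and Q: "Q \<in> carrier_mat n n" and PQ: "P * Q = 1\<^sub>m n"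
    and X: "X \<in> carrier_mat n n" and Y: "Y \<in> carrier_mat n n"
  shows "Q * (X * Y) * P = (Q * X * P) * (Q * Y * P)"
proof -
  have cancel: "P * (Q * Z) = Z" if Z: "Z \<in> carrier_mat n n" for Z
    using assoc_mult_mat[OF P Q Z] PQ Z by simp
  show ?thesis using P Q X Y
    by (simp add: assoc_mult_mat[of _ n n _ n _ n] cancel)
qed

lemma unitriangular_conj_inv_mat:
  fixes P Q x :: "'a :: field mat"
  assumes P: "P \<in> carrier_mat n n" and Q: "Q \<in> carrier_mat n n" and PQ: "P * Q = 1\<^sub>m n"
    and x: "x \<in> SL_mat n" and unitri: "unitriangular n (Q * x * P)"
  shows "unitriangular n (Q * inv_mat n x * P)"
proof (rule unitriangular_right_inverse[OF unitri])
  note ix = SL_mat_inv[OF x]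
  have QP: "Q * P = 1\<^sub>m n" by (rule mat_mult_left_right_inverse[OF P Q PQ])
  show "Q * inv_mat n x * P \<in> carrier_mat n n" using P Q ix(1) by simp
  show "(Q * x * P) * (Q * inv_mat n x * P) = 1\<^sub>m n"
    using conj_mult_distrib[OF P Q PQ SL_mat_carrier[OF x] ix(1)] ix(2) QP Q by simp
qed

lemma rack_type_D_by_unitriangular_frame:
  fixes u P Q :: "'a :: field mat"
  assumes u: "u \<in> SL_mat n"
    and P: "P \<in> carrier_mat n n" and Q: "Q \<in> carrier_mat n n" and PQ: "P * Q = 1\<^sub>m n"
    and r: "r \<in> conj_class_SL n u" and s: "s \<in> conj_class_SL n u"
    and A: "Q * r * P = A" and B: "Q * s * P = B"
    and A_unitri: "unitriangular n A" and B_unitri: "unitriangular n B"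
    and c: "Suc c < n" and neq: "A $$ (c, Suc c) \<noteq> B $$ (c, Suc c)"
    and ne: "A * B * (A * B) \<noteq> B * A * (B * A)"
  shows "rack_type_D (conj_op n) (conj_class_SL n u)"
proof -
  note conj = conj_mult_distrib[OF P Q PQ]
  define K where "K = {x \<in> carrier_mat n n. unitriangular n (Q * x * P)}"
  have K_mult: "x * y \<in> K" if "x \<in> K" "y \<in> K" for x y
    using that conj[of x y] unitriangular_mult[of n "Q * x * P" "Q * y * P"]
    unfolding K_def by auto
  have K_inv: "inv_mat n x \<in> K" if "x \<in> K" "x \<in> SL_mat n" for x
    using unitriangular_conj_inv_mat[OF P Q PQ that(2)] SL_mat_inv(1)[OF that(2)] that(1)
    unfolding K_def by blast
  define \<pi> where "\<pi> x = (Q * x * P) $$ (c, Suc c)" for x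
  have \<pi>_mult: "\<pi> (x * y) = \<pi> x + \<pi> y" if "x \<in> K" "y \<in> K" for x y
    using that conj[of x y] unitriangular_mult_superdiag[OF _ _ c, of "Q * x * P" "Q * y * P"]
    unfolding K_def \<pi>_def by auto
  have O_carrier: "x \<in> carrier_mat n n" if "x \<in> conj_class_SL n u" for x
    using SL_mat_carrier conj_class_SL_subset[OF u] that by blast
  have "Q * (r * s * (r * s)) * P = A * B * (A * B)" "Q * (s * r * (s * r)) * P = B * A * (B * A)"
    using conj O_carrier[OF r] O_carrier[OF s] A B by (simp_all add: mult_carrier_mat[of _ n n _ n])
  hence "r * s * (r * s) \<noteq> s * r * (s * r)" using ne by metis
  moreover have "r \<in> K" "s \<in> K" "\<pi> r \<noteq> \<pi> s"
    using O_carrier[OF r] O_carrier[OF s] A B A_unitri B_unitri neq unfolding K_def \<pi>_def by auto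
  ultimately show ?thesis
    using rack_type_D_by_homomorphism[where K = K and \<pi> = \<pi>, OF u K_mult K_inv \<pi>_mult r _ s] by blast
qed

section \<open>Unipotent Jordan matrices\<close>

definition jordan_entry :: "nat set \<Rightarrow> nat \<Rightarrow> nat \<Rightarrow> 'a :: {zero,one}" where
  "jordan_entry BS i j = (if i = j then 1 else if Suc i = j \<and> j \<notin> BS then 1 else 0)"

fun block_starts :: "nat list \<Rightarrow> nat set" where
  "block_starts [] = {0}"
| "block_starts (a # ns) = insert 0 ((+) a ` block_starts ns)"

text \<open>\<open>block_starts ns\<close> also contains the end \<open>sum_list ns\<close> of the last block.\<close>

lemma block_starts_0[simp]: "0 \<in> block_starts ns"
  by (cases ns) auto

lemma block_starts_append:
  "block_starts (xs @ ys) = block_starts xs \<union> (+) (sum_list xs) ` block_starts ys"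
  by (induction xs) (auto simp: image_iff add.assoc)

lemma block_starts_le: "x \<in> block_starts xs \<Longrightarrow> x \<le> sum_list xs"
  by (induction xs arbitrary: x) auto

lemma jordan_matrix_Cons_unipotent:
  "jordan_matrix ((a,1) # xs) = four_block_mat (jordan_block a 1)
     (0\<^sub>m a (dim_col (jordan_matrix xs))) (0\<^sub>m (dim_row (jordan_matrix xs)) a) (jordan_matrix xs)"
  unfolding jordan_matrix_def by (simp add: Let_def)

lemma jordan_matrix_unipotent_index:
  "i < sum_list ns \<Longrightarrow> j < sum_list ns \<Longrightarrow>
   jordan_matrix (map (\<lambda>x. (x, 1 :: 'a :: {zero,one})) ns) $$ (i,j) = jordan_entry (block_starts ns) i j"
proof (induction ns arbitrary: i j)
  case Nil thus ?case by simp
next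
  case (Cons a ns)
  let ?J = "jordan_matrix (map (\<lambda>x. (x, 1 :: 'a)) ns)"
  have dims: "dim_row ?J = sum_list ns" "dim_col ?J = sum_list ns" by (simp_all add: o_def)
  consider "i < a" "j < a" | "i < a" "\<not> j < a" | "\<not> i < a" "j < a" | "\<not> i < a" "\<not> j < a"
    by blast
  thus ?case
  proof cases
    case 2
    have "Suc i < a \<or> Suc i \<in> (+) a ` block_starts ns"
      using \<open>i < a\<close> image_eqI[of a "(+) a" 0 "block_starts ns"] by (cases "Suc i = a") auto
    thus ?thesis using 2 Cons.prems dims
      by (auto simp: jordan_matrix_Cons_unipotent jordan_entry_def)
  next
    case 4
    have IH: "?J $$ (i - a, j - a) = jordan_entry (block_starts ns) (i - a) (j - a)"
      using Cons.IH[of "i - a" "j - a"] Cons.prems 4 by auto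
    have "jordan_matrix (map (\<lambda>x. (x, 1 :: 'a)) (a # ns)) $$ (i,j) = ?J $$ (i - a, j - a)"
      using 4 Cons.prems dims by (simp add: jordan_matrix_Cons_unipotent)
    also have "\<dots> = jordan_entry (block_starts (a # ns)) i j"
      unfolding IH jordan_entry_def using 4 by (auto simp: image_iff)
    finally show ?thesis .
  qed (use Cons.prems dims in \<open>auto simp: jordan_matrix_Cons_unipotent jordan_entry_def\<close>)
qed

definition jordan_mat :: "nat \<Rightarrow> nat set \<Rightarrow> 'a :: {zero,one} mat" where
  "jordan_mat n BS = mat n n (\<lambda>(i,j). jordan_entry BS i j)"

lemma jordan_mat_carrier[simp]: "jordan_mat n BS \<in> carrier_mat n n"
  unfolding jordan_mat_def by auto

lemma jordan_mat_index[simp]: "i < n \<Longrightarrow> j < n \<Longrightarrow> jordan_mat n BS $$ (i,j) = jordan_entry BS i j"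
  unfolding jordan_mat_def by auto

lemma unitriangular_jordan_mat: "unitriangular n (jordan_mat n BS :: 'a :: comm_ring_1 mat)"
  unfolding unitriangular_def by (auto simp: jordan_entry_def)

lemma unipotent_of_type_similar_jordan_mat:
  fixes u :: "'a :: field mat"
  assumes u: "u \<in> carrier_mat n n" and type: "unipotent_of_type u lam"
  obtains P Q ns where "P \<in> carrier_mat n n" "Q \<in> carrier_mat n n" "P * Q = 1\<^sub>m n"
    "u = P * jordan_mat n (block_starts ns) * Q" "mset ns = mset lam" "sum_list ns = n"
proof -
  from type obtain n_as where jnf: "jordan_nf u n_as" and ones: "\<forall>p \<in> set n_as. snd p = 1"
    and ms: "mset (map fst n_as) = mset lam"
    unfolding unipotent_of_type_def by auto
  define ns where "ns = map fst n_as"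
  have n_as: "n_as = map (\<lambda>x. (x, 1)) ns" unfolding ns_def using ones by (induction n_as) auto
  from jnf obtain P Q where "similar_mat_wit u (jordan_matrix n_as) P Q"
    unfolding jordan_nf_def similar_mat_def by auto
  hence J: "jordan_matrix n_as \<in> carrier_mat n n" and P: "P \<in> carrier_mat n n"
    and Q: "Q \<in> carrier_mat n n" and PQ: "P * Q = 1\<^sub>m n" and uPJQ: "u = P * jordan_matrix n_as * Q"
    using u unfolding similar_mat_wit_def Let_def by auto
  have sum: "sum_list ns = n" using J unfolding ns_def by auto
  have "jordan_matrix n_as = jordan_mat n (block_starts ns)"
  proof (rule eq_matI)
    fix i j assume "i < dim_row (jordan_mat n (block_starts ns) :: 'a mat)"
      "j < dim_col (jordan_mat n (block_starts ns) :: 'a mat)"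
    thus "jordan_matrix n_as $$ (i,j) = jordan_mat n (block_starts ns) $$ (i,j)"
      using sum jordan_matrix_unipotent_index[of i ns j] by (simp add: n_as jordan_mat_def)
  qed (use J in \<open>auto simp: jordan_mat_def\<close>)
  hence "u = P * jordan_mat n (block_starts ns) * Q" using uPJQ by simp
  thus ?thesis using that P Q PQ ms sum unfolding ns_def by blast
qed

section \<open>Conjugating by a 3-cycle\<close>

definition cycle3 :: "nat \<Rightarrow> nat \<Rightarrow> nat \<Rightarrow> nat" where
  "cycle3 k t i = (if i = k then t else if i = t then Suc t else if i = Suc t then k else i)"

definition cycled_jordan_mat :: "nat \<Rightarrow> nat set \<Rightarrow> nat \<Rightarrow> nat \<Rightarrow> 'a :: {zero,one} mat" where
  "cycled_jordan_mat n BS k t = mat n n (\<lambda>(i,j). jordan_entry BS (cycle3 k t i) (cycle3 k t j))"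

lemma cycled_jordan_mat_carrier[simp]: "cycled_jordan_mat n BS k t \<in> carrier_mat n n"
  unfolding cycled_jordan_mat_def by auto

lemma cycled_jordan_mat_index[simp]:
  "i < n \<Longrightarrow> j < n \<Longrightarrow> cycled_jordan_mat n BS k t $$ (i,j) = jordan_entry BS (cycle3 k t i) (cycle3 k t j)"
  unfolding cycled_jordan_mat_def by auto

definition cycle_perm_mat :: "nat \<Rightarrow> nat \<Rightarrow> nat \<Rightarrow> 'a :: comm_ring_1 mat" where
  "cycle_perm_mat n k t = swaprows_mat n k (Suc t) * swaprows_mat n t (Suc t)"

definition cycle_perm_mat_inv :: "nat \<Rightarrow> nat \<Rightarrow> nat \<Rightarrow> 'a :: comm_ring_1 mat" where
  "cycle_perm_mat_inv n k t = swaprows_mat n t (Suc t) * swaprows_mat n k (Suc t)"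

lemma index_mult_swaprows_mat:
  fixes A :: "'a :: comm_ring_1 mat"
  assumes A: "A \<in> carrier_mat n n" and k: "k < n" and l: "l < n" and i: "i < n" and j: "j < n"
  shows "(A * swaprows_mat n k l) $$ (i,j) = A $$ (i, if j = k then l else if j = l then k else j)"
proof -
  let ?m = "if j = k then l else if j = l then k else j"
  have "(A * swaprows_mat n k l) $$ (i,j) = (\<Sum>x\<in>{?m}. A $$ (i,x) * swaprows_mat n k l $$ (x,j))"
    by (rule index_mult_mat_support[OF A swaprows_mat_carrier i j]) (use k l j in \<open>auto split: if_splits\<close>)
  thus ?thesis using k l j by auto
qed

context
  fixes n k t :: nat
  assumes kt: "k < t" and tn: "Suc t < n"
begin

lemma cycle_perm_mat_carrier[simp]:
  "cycle_perm_mat n k t \<in> carrier_mat n n" "cycle_perm_mat_inv n k t \<in> carrier_mat n n"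
  unfolding cycle_perm_mat_def cycle_perm_mat_inv_def by auto

lemma cycle_perm_mat_mult_inv: "cycle_perm_mat n k t * cycle_perm_mat_inv n k t = (1\<^sub>m n :: 'a :: comm_ring_1 mat)"
proof -
  let ?A = "swaprows_mat n k (Suc t) :: 'a mat" and ?B = "swaprows_mat n t (Suc t) :: 'a mat"
  have c: "?A \<in> carrier_mat n n" "?B \<in> carrier_mat n n" by auto
  have "?A * ?A = 1\<^sub>m n" "?B * ?B = 1\<^sub>m n" by (rule swaprows_mat_inv; use kt tn in auto)+
  moreover have "cycle_perm_mat n k t * cycle_perm_mat_inv n k t = ?A * ((?B * ?B) * ?A)"
    unfolding cycle_perm_mat_def cycle_perm_mat_inv_def
    using assoc_mult_mat[OF c(1) c(2) mult_carrier_mat[OF c(2) c(1)]]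
      assoc_mult_mat[OF c(2) c(2) c(1)] by simp
  ultimately show ?thesis using c by simp
qed

lemma det_cycle_perm_mat: "det (cycle_perm_mat n k t :: 'a :: comm_ring_1 mat) = 1"
  unfolding cycle_perm_mat_def using kt tn by (simp add: det_mult[of _ n] det_swaprows_mat)

lemma cycle_perm_mat_conj_jordan_mat:
  "cycle_perm_mat n k t * jordan_mat n BS * cycle_perm_mat_inv n k t
     = (cycled_jordan_mat n BS k t :: 'a :: comm_ring_1 mat)"
proof -
  let ?A = "swaprows_mat n k (Suc t) :: 'a mat" and ?B = "swaprows_mat n t (Suc t) :: 'a mat"
  let ?J = "jordan_mat n BS :: 'a mat"
  let ?M = "swaprows k (Suc t) (swaprows t (Suc t) ?J)"
  have c: "?A \<in> carrier_mat n n" "?B \<in> carrier_mat n n" "?J \<in> carrier_mat n n" by auto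
  have dJ: "dim_row ?J = n" "dim_col ?J = n" by (simp_all add: jordan_mat_def)
  have M1: "swaprows t (Suc t) ?J = ?B * ?J"
    by (rule swaprows_mat[of _ n n]) (use kt tn in auto)
  have M2: "?M = ?A * swaprows t (Suc t) ?J"
    by (rule swaprows_mat[of _ n n]) (use kt tn in auto)
  have M: "?A * (?B * ?J) = ?M" by (subst M2, subst M1, rule refl)
  have BJ: "?A * (?B * ?J) \<in> carrier_mat n n" by (rule mult_carrier_mat[OF c(1) mult_carrier_mat[OF c(2) c(3)]])
  have "cycle_perm_mat n k t * ?J * cycle_perm_mat_inv n k t = ((?A * (?B * ?J)) * ?B) * ?A"
    unfolding cycle_perm_mat_def cycle_perm_mat_inv_def assoc_mult_mat[OF c]
      assoc_mult_mat[OF BJ c(2) c(1)] ..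
  also have "\<dots> = cycled_jordan_mat n BS k t"
  proof (rule eq_matI)
    fix i j assume "i < dim_row (cycled_jordan_mat n BS k t :: 'a mat)"
      and "j < dim_col (cycled_jordan_mat n BS k t :: 'a mat)"
    hence i: "i < n" and j: "j < n" by (auto simp: cycled_jordan_mat_def)
    define j1 where "j1 = (if j = k then Suc t else if j = Suc t then k else j)"
    have j1: "j1 < n" using j kt tn unfolding j1_def by auto
    have MB: "?M * ?B \<in> carrier_mat n n" by (rule mult_carrier_mat) (use c in auto)
    have "(?M * ?B * ?A) $$ (i,j) = (?M * ?B) $$ (i, j1)"
      unfolding j1_def by (rule index_mult_swaprows_mat[OF MB _ _ i j]) (use kt tn in auto)
    also have "\<dots> = ?M $$ (i, if j1 = t then Suc t else if j1 = Suc t then t else j1)"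
      by (rule index_mult_swaprows_mat[OF _ _ _ i j1]) (use kt tn in auto)
    also have "\<dots> = cycled_jordan_mat n BS k t $$ (i,j)"
      using kt tn i j j1 unfolding j1_def by (auto simp: cycle3_def dJ)
    finally show "(?A * (?B * ?J) * ?B * ?A) $$ (i,j) = cycled_jordan_mat n BS k t $$ (i,j)"
      unfolding M .
  qed (auto simp: cycled_jordan_mat_def)
  finally show ?thesis .
qed

end

lemma conj_class_SL_similar:
  fixes u P Q J g h :: "'a :: field mat"
  assumes u: "u = P * J * Q" and P: "P \<in> carrier_mat n n" and Q: "Q \<in> carrier_mat n n"
    and PQ: "P * Q = 1\<^sub>m n" and J: "J \<in> carrier_mat n n"
    and g: "g \<in> carrier_mat n n" and h: "h \<in> carrier_mat n n" and gh: "g * h = 1\<^sub>m n"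
    and det_g: "det g = 1"
  shows "P * (g * J * h) * Q \<in> conj_class_SL n u"
proof -
  have QP: "Q * P = 1\<^sub>m n" by (rule mat_mult_left_right_inverse[OF P Q PQ])
  note conj = conj_mult_distrib[OF Q P QP]
  define G where "G = P * g * Q"
  have G: "G \<in> carrier_mat n n" "P * h * Q \<in> carrier_mat n n"
    unfolding G_def using P Q g h by auto
  have "det G = det (P * Q)"
    unfolding G_def using P Q g det_g by (simp add: det_mult[of _ n])
  hence G_SL: "G \<in> SL_mat n" using G PQ unfolding SL_mat_def by simp
  have "G * (P * h * Q) = 1\<^sub>m n" unfolding G_def using conj[OF g h] gh PQ P by simp
  hence inv_G: "inv_mat n G = P * h * Q" by (rule inv_mat_eqI[OF G])
  have "P * (g * J * h) * Q = P * (g * J) * Q * (P * h * Q)"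
    by (rule conj) (use g J h in auto)
  also have "P * (g * J) * Q = G * u" unfolding G_def u by (rule conj[OF g J])
  finally have "P * (g * J * h) * Q = conj_op n G u" unfolding conj_op_def inv_G .
  thus ?thesis using G_SL unfolding conj_class_SL_def by blast
qed

section \<open>Two blocks of size at least three\<close>

lemma two_parts_ge_3:
  fixes lam ns :: "nat list"
  assumes m: "mset ns = mset lam" and i: "1 \<le> i" "i < length lam"
    and ge: "lam ! (i - 1) \<ge> 3" "lam ! i \<ge> 3"
  obtains xs a ys b zs where "ns = xs @ a # ys @ b # zs" "a \<ge> 3" "b \<ge> 3"
proof -
  let ?P = "\<lambda>x::nat. 3 \<le> x"
  have "drop i lam = lam ! i # drop (Suc i) lam"
    using i(2) by (rule Cons_nth_drop_Suc[symmetric])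
  moreover have "drop (i - 1) lam = lam ! (i - 1) # drop i lam"
    using Cons_nth_drop_Suc[of "i - 1" lam] i by simp
  ultimately have dec: "lam = take (i - 1) lam @ lam ! (i - 1) # lam ! i # drop (Suc i) lam"
    by (metis append_take_drop_id)
  have "length (filter ?P lam) \<ge> 2" using ge by (subst dec) simp
  moreover have "length (filter ?P ns) = length (filter ?P lam)"
    by (metis m mset_filter size_mset)
  ultimately obtain y1 y2 rest where f: "filter ?P ns = y1 # y2 # rest"
    by (metis Suc_le_length_iff numeral_2_eq_2)
  from filter_eq_ConsD[OF f] obtain us vs where 1: "ns = us @ y1 # vs" "?P y1" "y2 # rest = filter ?P vs"
    by blast
  from filter_eq_ConsD[OF 1(3)[symmetric]] obtain us2 vs2 where 2: "vs = us2 @ y2 # vs2" "?P y2"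
    by blast
  show ?thesis using that 1 2 by simp
qed

text \<open>Positions \<open>p, p+1, k = p+2\<close> end a block and \<open>t, t+1\<close> begin a later block.\<close>

locale long_block_pair =
  fixes n p k t :: nat and BS :: "nat set"
  assumes k: "k = Suc (Suc p)" and kt: "k < t" and tn: "Suc t < n"
    and not_start_p: "Suc p \<notin> BS" and not_start_k: "k \<notin> BS" and start_after_k: "Suc k \<in> BS"
    and start_t: "t \<in> BS" and not_start_t: "Suc t \<notin> BS"
begin

abbreviation J :: "'a :: {zero,one} mat" where "J \<equiv> jordan_mat n BS"
abbreviation S :: "'a :: {zero,one} mat" where "S \<equiv> cycled_jordan_mat n BS k t"

lemma positions_lt: "p < n" "Suc p < n" "k < n" "t < n"
  using k kt tn by auto

lemma unitriangular_cycled_jordan_mat: "unitriangular n (S :: 'a :: comm_ring_1 mat)"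
  unfolding unitriangular_def using k kt tn start_after_k start_t
  by (auto simp: jordan_entry_def cycle3_def)

lemma superdiag_jordan_mat:
  "(J :: 'a :: comm_ring_1 mat) $$ (Suc p, Suc (Suc p)) = 1"
  "(S :: 'a :: comm_ring_1 mat) $$ (Suc p, Suc (Suc p)) = 0"
  using k kt tn not_start_k start_t by (auto simp: jordan_entry_def cycle3_def)

lemma col_t_jordan_cycled:
  assumes x: "x < n"
  shows "(J * S :: 'a :: field mat) $$ (x,t) = J $$ (x,t) + J $$ (x,k)"
proof -
  have "(J * S :: 'a mat) $$ (x,t) = (\<Sum>l\<in>{t,k}. J $$ (x,l) * S $$ (l,t))"
    by (rule index_mult_mat_support[OF _ _ x])
      (use positions_lt not_start_t kt in \<open>auto simp: jordan_entry_def cycle3_def\<close>)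
  thus ?thesis using positions_lt kt not_start_t by (auto simp: jordan_entry_def cycle3_def)
qed

lemma row_p_jordan_cycled:
  assumes y: "y < n"
  shows "(J * S :: 'a :: field mat) $$ (p,y) = S $$ (p,y) + S $$ (Suc p,y)"
proof -
  have "(J * S :: 'a mat) $$ (p,y) = (\<Sum>l\<in>{p, Suc p}. J $$ (p,l) * S $$ (l,y))"
    by (rule index_mult_mat_support[OF _ _ _ y])
      (use positions_lt not_start_p in \<open>auto simp: jordan_entry_def\<close>)
  thus ?thesis using positions_lt not_start_p y by (auto simp: jordan_entry_def simp del: cycled_jordan_mat_index)
qed

lemma col_t_cycled_jordan:
  assumes x: "x < n"
  shows "(S * J :: 'a :: field mat) $$ (x,t) = S $$ (x,t)"
proof -
  have "(S * J :: 'a mat) $$ (x,t) = (\<Sum>l\<in>{t}. S $$ (x,l) * J $$ (l,t))"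
    by (rule index_mult_mat_support[OF _ _ x])
      (use positions_lt start_t in \<open>auto simp: jordan_entry_def\<close>)
  thus ?thesis using positions_lt by (auto simp: jordan_entry_def simp del: cycled_jordan_mat_index)
qed

lemma row_p_cycled_jordan:
  assumes y: "y < n"
  shows "(S * J :: 'a :: field mat) $$ (p,y) = J $$ (p,y) + J $$ (Suc p,y)"
proof -
  have "(S * J :: 'a mat) $$ (p,y) = (\<Sum>l\<in>{p, Suc p}. S $$ (p,l) * J $$ (l,y))"
    by (rule index_mult_mat_support[OF _ _ _ y])
      (use positions_lt not_start_p k kt in \<open>auto simp: jordan_entry_def cycle3_def\<close>)
  thus ?thesis using positions_lt not_start_p k kt y
    by (auto simp: jordan_entry_def cycle3_def simp del: jordan_mat_index)
qed

lemma square_jordan_cycled_neq: "(J * S * (J * S) :: 'a :: field mat) \<noteq> S * J * (S * J)"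
proof -
  have c: "(J * S :: 'a mat) \<in> carrier_mat n n" "(S * J :: 'a mat) \<in> carrier_mat n n"
    by (rule mult_carrier_mat[OF jordan_mat_carrier cycled_jordan_mat_carrier],
        rule mult_carrier_mat[OF cycled_jordan_mat_carrier jordan_mat_carrier])
  have ne: "t \<noteq> k" "k \<noteq> Suc p" "t \<noteq> Suc p" "p \<noteq> k" "p \<noteq> t" "p \<noteq> Suc t"
    "Suc p \<noteq> Suc t" "k \<noteq> Suc t" "Suc k \<noteq> t \<or> t \<in> BS"
    using k kt start_t by auto
  have kk: "\<And>l. Suc l = k \<longleftrightarrow> l = Suc p" using k by auto
  have "(J * S * (J * S) :: 'a mat) $$ (p,t) = (\<Sum>l\<in>{t,k,Suc p}. (J * S) $$ (p,l) * (J * S) $$ (l,t))"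
    by (rule index_mult_mat_support[OF c(1) c(1) positions_lt(1) positions_lt(4)])
      (use positions_lt start_t in \<open>auto simp: col_t_jordan_cycled jordan_entry_def kk\<close>)
  also have "\<dots> = 1 + 1" using positions_lt kk kt not_start_p not_start_k start_t not_start_t ne
    by (simp add: col_t_jordan_cycled row_p_jordan_cycled jordan_entry_def cycle3_def)
  finally have JS: "(J * S * (J * S) :: 'a mat) $$ (p,t) = 1 + 1" .
  have "(S * J * (S * J) :: 'a mat) $$ (p,t) = (\<Sum>l\<in>{t,k}. (S * J) $$ (p,l) * (S * J) $$ (l,t))"
    by (rule index_mult_mat_support[OF c(2) c(2) positions_lt(1) positions_lt(4)])
      (use positions_lt not_start_t kt in \<open>auto simp: col_t_cycled_jordan jordan_entry_def cycle3_def\<close>)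
  also have "\<dots> = 1" using positions_lt kk kt not_start_p not_start_k start_t not_start_t ne
    by (simp add: col_t_cycled_jordan row_p_cycled_jordan jordan_entry_def cycle3_def)
  finally have SJ: "(S * J * (S * J) :: 'a mat) $$ (p,t) = 1" .
  have "(1::'a) + 1 \<noteq> 1" by (metis add_cancel_right_right zero_neq_one)
  with JS SJ show ?thesis by auto
qed

lemma rack_type_D_conj_class:
  fixes u P Q :: "'a :: field mat"
  assumes u: "u \<in> SL_mat n" and P: "P \<in> carrier_mat n n" and Q: "Q \<in> carrier_mat n n"
    and PQ: "P * Q = 1\<^sub>m n" and uJ: "u = P * jordan_mat n BS * Q"
  shows "rack_type_D (conj_op n) (conj_class_SL n u)"
proof -
  let ?J = "J :: 'a mat" and ?S = "S :: 'a mat"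
  have QP: "Q * P = 1\<^sub>m n" by (rule mat_mult_left_right_inverse[OF P Q PQ])
  have frame: "Q * (P * X * Q) * P = X" if X: "X \<in> carrier_mat n n" for X
  proof -
    have "Q * (P * X * Q) * P = (Q * P) * X * (Q * P)"
      using P Q X by (simp add: assoc_mult_mat[of _ n n _ n _ n] mult_carrier_mat[of _ n n _ n])
    thus ?thesis using QP X by simp
  qed
  have s: "P * ?S * Q \<in> conj_class_SL n u"
    using conj_class_SL_similar[OF uJ P Q PQ jordan_mat_carrier cycle_perm_mat_carrier[OF kt tn]
        cycle_perm_mat_mult_inv[OF kt tn] det_cycle_perm_mat[OF kt tn]]
    unfolding cycle_perm_mat_conj_jordan_mat[OF kt tn] .
  have frame_u: "Q * u * P = ?J" and frame_s: "Q * (P * ?S * Q) * P = ?S"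
    unfolding uJ by (rule frame; simp)+
  have "Suc (Suc p) < n" "?J $$ (Suc p, Suc (Suc p)) \<noteq> ?S $$ (Suc p, Suc (Suc p))"
    using kt tn k superdiag_jordan_mat[where 'a = 'a] by auto
  thus ?thesis
    by (rule rack_type_D_by_unitriangular_frame[OF u P Q PQ self_in_conj_class_SL[OF u] s
          frame_u frame_s unitriangular_jordan_mat unitriangular_cycled_jordan_mat _ _
          square_jordan_cycled_neq])
qed

end

lemma long_block_pair_of_decomposition:
  assumes ns: "ns = xs @ a # ys @ b # zs" and a: "3 \<le> a" and b: "3 \<le> b"
  obtains p k t where "long_block_pair (sum_list ns) p k t (block_starts ns)"
proof -
  define p0 where "p0 = sum_list xs"
  have BS: "block_starts ns = block_starts xs \<union> (+) p0 ` insert 0 ((+) a `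
      (block_starts ys \<union> (+) (sum_list ys) ` insert 0 ((+) b ` block_starts zs)))"
    unfolding ns p0_def by (simp add: block_starts_append)
  have sum: "sum_list ns = p0 + a + sum_list ys + b + sum_list zs" unfolding ns p0_def by simp
  have hx: "x \<le> p0" if "x \<in> block_starts xs" for x unfolding p0_def using that by (rule block_starts_le)
  have hy: "x \<le> sum_list ys" if "x \<in> block_starts ys" for x using that by (rule block_starts_le)
  have "long_block_pair (sum_list ns) (p0 + a - 3) (p0 + a - 1) (p0 + a + sum_list ys) (block_starts ns)"
    unfolding BS sum by unfold_locales (use a b hx hy in \<open>force+\<close>)
  thus ?thesis by (rule that)
qed

theorem mainTheorem12:
  fixes u :: "'a :: {finite, field} mat" and n :: nat and lam :: "nat list" and i :: nat
  assumes "even (card (UNIV :: 'a set))"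
    and "u \<in> SL_mat n"
    and "unipotent_of_type u lam"
    and "1 \<le> i" and "i < length lam"
    and "lam ! (i - 1) \<ge> lam ! i" and "lam ! i \<ge> 3"
  shows "rack_type_D (conj_op n) (conj_class_SL n u)"
proof -
  obtain P Q ns where P: "P \<in> carrier_mat n n" and Q: "Q \<in> carrier_mat n n" and PQ: "P * Q = 1\<^sub>m n"
    and uJ: "u = P * jordan_mat n (block_starts ns) * Q" and ms: "mset ns = mset lam"
    and sum: "sum_list ns = n"
    by (rule unipotent_of_type_similar_jordan_mat[OF SL_mat_carrier[OF assms(2)] assms(3)])
  have "lam ! (i - 1) \<ge> 3" using assms(6,7) by linarith
  then obtain xs a ys b zs where "ns = xs @ a # ys @ b # zs" "a \<ge> 3" "b \<ge> 3"
    by (rule two_parts_ge_3[OF ms assms(4,5) _ assms(7)])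
  then obtain p k t where "long_block_pair (sum_list ns) p k t (block_starts ns)"
    by (rule long_block_pair_of_decomposition)
  hence "long_block_pair n p k t (block_starts ns)" using sum by simp
  from long_block_pair.rack_type_D_conj_class[OF this assms(2) P Q PQ uJ] show ?thesis .
qed

end
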